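(* The subgroup $\mathrm{B}_2(\mathbb{C}[z])$ of upper triangular matrices of $\mathrm{GL}_2(\mathbb{C}[z])$ is a maximal solvable subgroup: every subgroup of $\mathrm{GL}_2(\mathbb{C}[z])$ strictly containing it is not solvable.
   Context: $\mathrm{GL}_2(\mathbb{C}[z])$ is the group of $2\times2$ matrices over the polynomial ring $\mathbb{C}[z]$ that are invertible over $\mathbb{C}[z]$ (determinant in $\mathbb{C}^*$). *)

theory Defs
  imports "Jordan_Normal_Form.Determinant" "HOL-Algebra.Solvable_Groups"
          "HOL-Computational_Algebra.Polynomial"
begin

definition GL2_Cz :: "complex poly mat monoid" where
  "GL2_Cz = \<lparr> carrier = {A \<in> carrier_mat 2 2. is_unit (det A)},
             mult = (\<lambda>A B. A * B),
             one = 1\<^sub>m 2 \<rparr>"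

definition B2_Cz :: "complex poly mat set" where
  "B2_Cz = {A \<in> carrier GL2_Cz. upper_triangular A}"

end

theory Submission
  imports Defs
begin

text \<open>
  Upper triangular matrices over a commutative ring form a metabelian group: the commutator of two
  of them has diagonal entries 1, and such unipotent matrices commute with each other.

  For maximality, let H be a subgroup strictly containing B_2 and pick g in H outside B_2. Its lower left
  entry is a nonzero polynomial, hence nonzero at some point z. Evaluation at z is a homomorphism
  from GL_2(C[z]) to GL_2(C), and the image of H contains all upper transvections (the constant
  ones lie in B_2) as well as a matrix with nonzero lower left entry; conjugating by that matrix
  produces all lower transvections. The group generated by the transvections is perfect: every
  transvection is a commutator of diag(2, 1/2), itself a product of transvections, with another
  transvection. A solvable group has no nontrivial perfect subgroup, and solvability passes to
  homomorphic images, so H is not solvable.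
\<close>

section \<open>The general linear group over a commutative ring\<close>

definition GL :: "nat \<Rightarrow> 'a::comm_ring_1 mat monoid" where
  "GL n = \<lparr>carrier = {A \<in> carrier_mat n n. det A dvd 1}, mult = (*), one = 1\<^sub>m n\<rparr>"

lemma GL_simps [simp]:
  "carrier (GL n) = {A \<in> carrier_mat n n. det A dvd 1}"
  "mult (GL n) = (*)" "one (GL n) = 1\<^sub>m n"
  by (simp_all add: GL_def)

lemma GL2_Cz_eq_GL: "GL2_Cz = GL 2"
  by (simp add: GL2_Cz_def GL_def)

lemma adj_mat_left_inverse:
  assumes "A \<in> carrier_mat n n" and "u * det A = 1"
  shows "(u \<cdot>\<^sub>m adj_mat A) * A = 1\<^sub>m n"
proof -
  have "(u \<cdot>\<^sub>m adj_mat A) * A = u \<cdot>\<^sub>m (det A \<cdot>\<^sub>m 1\<^sub>m n)"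
    unfolding mult_smult_assoc_mat[OF adj_mat(1)[OF assms(1)] assms(1)] adj_mat(3)[OF assms(1)] ..
  also have "\<dots> = 1\<^sub>m n"
    by (rule eq_matI) (simp_all add: assms(2) mult.assoc[symmetric])
  finally show ?thesis .
qed

lemma group_GL: "group (GL n :: 'a::comm_ring_1 mat monoid)"
proof (rule groupI)
  fix A :: "'a mat" assume A: "A \<in> carrier (GL n)"
  then obtain u where u: "u * det A = 1"
    by (auto elim!: dvdE simp: mult.commute)
  define B where "B = u \<cdot>\<^sub>m adj_mat A"
  have B: "B \<in> carrier_mat n n" "B * A = 1\<^sub>m n"
    using A adj_mat(1)[of A n] adj_mat_left_inverse[OF _ u] by (simp_all add: B_def)
  then have "det B * det A = 1"
    using A det_mult[of B n A] by simp
  then have "det B dvd 1"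
    by (metis dvd_triv_left)
  with B show "\<exists>B\<in>carrier (GL n). B \<otimes>\<^bsub>GL n\<^esub> A = \<one>\<^bsub>GL n\<^esub>"
    by auto
next
  fix A B :: "'a mat" assume A: "A \<in> carrier (GL n)" and B: "B \<in> carrier (GL n)"
  have "det A * det B dvd 1 * 1"
    using A B by (intro mult_dvd_mono) simp_all
  then show "A \<otimes>\<^bsub>GL n\<^esub> B \<in> carrier (GL n)"
    using A B det_mult[of A n B] by simp
next
  show "\<one>\<^bsub>GL n\<^esub> \<in> carrier (GL n)" by simp
next
  fix A B C :: "'a mat" assume "A \<in> carrier (GL n)" "B \<in> carrier (GL n)" "C \<in> carrier (GL n)"
  then show "A \<otimes>\<^bsub>GL n\<^esub> B \<otimes>\<^bsub>GL n\<^esub> C = A \<otimes>\<^bsub>GL n\<^esub> (B \<otimes>\<^bsub>GL n\<^esub> C)"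
    by (simp add: assoc_mult_mat[of A n n B n C n])
next
  fix A :: "'a mat" assume "A \<in> carrier (GL n)"
  then show "\<one>\<^bsub>GL n\<^esub> \<otimes>\<^bsub>GL n\<^esub> A = A" by (auto intro: left_mult_one_mat)
qed

interpretation GL: group "GL n :: 'a::comm_ring_1 mat monoid" for n
  by (rule group_GL)

lemma GL_inv_eqI:
  assumes "A \<in> carrier (GL n)" "B \<in> carrier_mat n n" "B * A = 1\<^sub>m n"
  shows "inv\<^bsub>GL n\<^esub> A = (B :: 'a::comm_ring_1 mat)"
proof (rule GL.inv_equality)
  have "det B * det A = 1"
    using assms det_mult[of B n A] by simp
  then show "B \<in> carrier (GL n)"
    using assms(2) by (auto intro: dvdI[of 1 "det B" "det A"] simp: mult.commute)
qed (use assms in simp_all)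

definition mat2 :: "'a::zero \<Rightarrow> 'a \<Rightarrow> 'a \<Rightarrow> 'a \<Rightarrow> 'a mat" where
  "mat2 a b c d = mat 2 2 (\<lambda>(i, j). if i = 0 then (if j = 0 then a else b) else (if j = 0 then c else d))"

lemma mat2_carrier [simp]: "mat2 a b c d \<in> carrier_mat 2 2"
  by (simp add: mat2_def)

lemma index_mat2 [simp]:
  "mat2 a b c d $$ (0, 0) = a" "mat2 a b c d $$ (0, 1) = b"
  "mat2 a b c d $$ (1, 0) = c" "mat2 a b c d $$ (1, 1) = d"
  "mat2 a b c d $$ (0, Suc 0) = b" "mat2 a b c d $$ (Suc 0, 0) = c"
  "mat2 a b c d $$ (Suc 0, Suc 0) = d"
  by (simp_all add: mat2_def)

lemma less_2_cases: "(i::nat) < 2 \<longleftrightarrow> i = 0 \<or> i = 1"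
  by auto

lemma mat2_eta: "A \<in> carrier_mat 2 2 \<Longrightarrow> A = mat2 (A $$ (0, 0)) (A $$ (0, 1)) (A $$ (1, 0)) (A $$ (1, 1))"
  by (rule eq_matI) (auto simp: mat2_def less_2_cases)

lemma mat2_eq_iff [simp]:
  "mat2 a b c d = mat2 a' b' c' d' \<longleftrightarrow> a = a' \<and> b = b' \<and> c = c' \<and> d = d'"
  by (metis index_mat2(1-4))

lemma mult_mat2 [simp]:
  "mat2 (a::'a::comm_ring_1) b c d * mat2 e f g h =
     mat2 (a * e + b * g) (a * f + b * h) (c * e + d * g) (c * f + d * h)"
  by (rule eq_matI) (auto simp: mat2_def scalar_prod_def less_2_cases numeral_2_eq_2)

lemma one_mat2: "(1\<^sub>m 2 :: 'a::comm_ring_1 mat) = mat2 1 0 0 1"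
  by (rule eq_matI) (auto simp: mat2_def less_2_cases)

lemma det_mat2 [simp]: "det (mat2 (a::'a::comm_ring_1) b c d) = a * d - b * c"
proof -
  have "det (mat_delete (mat2 a b c d) 0 0) = d" "det (mat_delete (mat2 a b c d) 1 0) = b"
    by (subst det_single; auto simp: mat_delete_def mat2_def)+
  with mat2_carrier[of a b c d] show ?thesis
    by (subst laplace_expansion_column[where j = 0 and n = 2])
      (auto simp: cofactor_def numeral_2_eq_2)
qed

lemma map_mat_mat2 [simp]: "map_mat f (mat2 a b c d) = mat2 (f a) (f b) (f c) (f d)"
  by (rule eq_matI) (auto simp: mat2_def less_2_cases)

lemma index_mult_mat_2:
  assumes "A \<in> carrier_mat 2 2" "B \<in> carrier_mat 2 2" "i < 2" "j < 2"
  shows "(A * B) $$ (i, j) = A $$ (i, 0) * B $$ (0, j) + A $$ (i, 1) * (B :: 'a::comm_ring_1 mat) $$ (1, j)"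
  using assms by (auto simp: scalar_prod_def numeral_2_eq_2)

lemma det_mat_2:
  "A \<in> carrier_mat 2 2 \<Longrightarrow> det A = A $$ (0, 0) * A $$ (1, 1) - A $$ (0, 1) * (A :: 'a::comm_ring_1 mat) $$ (1, 0)"
  by (subst mat2_eta) simp_all

section \<open>Solvability criteria\<close>

lemma (in group) commutator_eq_one_if_commute:
  assumes "x \<in> carrier G" "y \<in> carrier G" "x \<otimes> y = y \<otimes> x"
  shows "x \<otimes> y \<otimes> inv x \<otimes> inv y = \<one>"
proof -
  have "x \<otimes> y \<otimes> inv x \<otimes> inv y = y \<otimes> (x \<otimes> inv x) \<otimes> inv y"
    using assms by (simp only: assms(3) m_assoc inv_closed m_closed)
  also have "\<dots> = \<one>"
    using assms by simp
  finally show ?thesis .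
qed

lemma (in group) commutator_in_derived:
  "x \<in> H \<Longrightarrow> y \<in> H \<Longrightarrow> x \<otimes> y \<otimes> inv x \<otimes> inv y \<in> derived G H"
  unfolding derived_def by (blast intro: generate.incl)

lemma (in group) solvable_if_derived_set_in_abelian_subgroup:
  assumes A: "subgroup A G" and comm: "\<And>x y. x \<in> A \<Longrightarrow> y \<in> A \<Longrightarrow> x \<otimes> y = y \<otimes> x"
    and "derived_set G (carrier G) \<subseteq> A"
  shows "solvable G"
proof -
  have "derived G (carrier G) \<subseteq> A"
    unfolding derived_def by (rule generate_subgroup_incl[OF assms(3) A])
  moreover have "derived G A \<subseteq> {\<one>}"
    unfolding derived_def
  proof (rule generate_subgroup_incl[OF _ triv_subgroup])
    show "derived_set G A \<subseteq> {\<one>}"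
      using subgroup.mem_carrier[OF A] comm by (auto intro: commutator_eq_one_if_commute)
  qed
  ultimately have "(derived G ^^ 2) (carrier G) \<subseteq> {\<one>}"
    using mono_derived[of "derived G (carrier G)" A] by (simp add: numeral_2_eq_2)
  moreover have "\<one> \<in> (derived G ^^ 2) (carrier G)"
    using subgroup.one_closed[OF exp_of_derived_is_subgroup[OF subgroup_self]] .
  ultimately show ?thesis
    using solvable_iff_trivial_derived_seq by blast
qed

lemma (in group) not_solvable_seq_if_perfect_subset:
  assumes K: "subgroup K G" and "P \<subseteq> K" and perfect: "P \<subseteq> derived G P"
    and "x \<in> P" "x \<noteq> \<one>"
  shows "\<not> solvable_seq G K"
proof
  assume "solvable_seq G K"
  then obtain n where n: "(derived G ^^ n) K = {\<one>}"
    using solvable_imp_trivial_derived_seq by blast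
  have "P \<subseteq> (derived G ^^ k) P" for k
  proof (induction k)
    case (Suc k)
    then show ?case
      using perfect mono_derived[OF Suc] by simp
  qed simp
  also have "(derived G ^^ n) P \<subseteq> (derived G ^^ n) K"
    by (rule mono_exp_of_derived[OF \<open>P \<subseteq> K\<close>])
  finally show False
    using n \<open>x \<in> P\<close> \<open>x \<noteq> \<one>\<close> by blast
qed

section \<open>The upper triangular subgroup is metabelian\<close>

definition B2 :: "'a::comm_ring_1 mat set" where
  "B2 = {A \<in> carrier (GL 2). A $$ (1, 0) = 0}"

definition U2 :: "'a::comm_ring_1 mat set" where
  "U2 = {A \<in> B2. A $$ (0, 0) = 1 \<and> A $$ (1, 1) = 1}"

lemma B2_Cz_eq_B2: "B2_Cz = B2"
  unfolding B2_Cz_def B2_def GL2_Cz_eq_GL upper_triangular_def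
  by (auto simp: less_2_cases less_Suc_eq)

lemma B2_eq_mat2: "A \<in> B2 \<Longrightarrow> A = mat2 (A $$ (0, 0)) (A $$ (0, 1)) 0 (A $$ (1, 1))"
  unfolding B2_def using mat2_eta[of A] by auto

lemma B2_mult_entries:
  assumes "A \<in> B2" "B \<in> B2"
  shows "(A * B) $$ (0, 0) = A $$ (0, 0) * B $$ (0, 0)" "(A * B) $$ (1, 1) = A $$ (1, 1) * B $$ (1, 1)"
    "(A * B) $$ (0, 1) = A $$ (0, 0) * B $$ (0, 1) + A $$ (0, 1) * B $$ (1, 1)"
    "(A * B) $$ (1, 0) = 0"
proof -
  have "A * B = mat2 (A $$ (0, 0)) (A $$ (0, 1)) 0 (A $$ (1, 1)) * mat2 (B $$ (0, 0)) (B $$ (0, 1)) 0 (B $$ (1, 1))"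
    using B2_eq_mat2[OF assms(1)] B2_eq_mat2[OF assms(2)] by (rule arg_cong2[where f = "(*)"])
  then show "(A * B) $$ (0, 0) = A $$ (0, 0) * B $$ (0, 0)" "(A * B) $$ (1, 1) = A $$ (1, 1) * B $$ (1, 1)"
    "(A * B) $$ (0, 1) = A $$ (0, 0) * B $$ (0, 1) + A $$ (0, 1) * B $$ (1, 1)"
    "(A * B) $$ (1, 0) = 0"
    by simp_all
qed

lemma B2_mult_closed: "A \<in> B2 \<Longrightarrow> B \<in> B2 \<Longrightarrow> A * B \<in> B2"
  using GL.m_closed[of A 2 B] B2_mult_entries(4)[of A B] by (simp add: B2_def)

lemma one_in_B2: "1\<^sub>m 2 \<in> B2"
  by (simp add: B2_def)

lemma subgroup_B2: "subgroup (B2 :: 'a::comm_ring_1 mat set) (GL 2)"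
proof (rule GL.subgroupI)
  show "B2 \<subseteq> carrier (GL 2)"
    by (auto simp: B2_def)
  show "B2 \<noteq> {}"
    using one_in_B2 by auto
next
  fix A B :: "'a mat" assume "A \<in> B2" "B \<in> B2"
  then show "A \<otimes>\<^bsub>GL 2\<^esub> B \<in> B2"
    by (simp add: B2_mult_closed)
next
  fix A :: "'a mat" assume A: "A \<in> B2"
  then have A_GL: "A \<in> carrier (GL 2)" and A10: "A $$ (1, 0) = 0"
    by (auto simp: B2_def)
  define I where "I = inv\<^bsub>GL 2\<^esub> A"
  have I_GL: "I \<in> carrier (GL 2)" and "I * A = 1\<^sub>m 2"
    using GL.l_inv[OF A_GL] GL.inv_closed[OF A_GL] by (simp_all add: I_def)
  then have "I $$ (1, 0) * A $$ (0, 0) = 0"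
    using A_GL A10 index_mult_mat_2[of I A 1 0] by simp
  have "A $$ (0, 0) * A $$ (1, 1) dvd 1"
    using A_GL A10 det_mat_2[of A] by simp
  then have "A $$ (0, 0) dvd 1"
    by (rule dvd_mult_left)
  then obtain w where "1 = A $$ (0, 0) * w"
    by (rule dvdE)
  with \<open>I $$ (1, 0) * A $$ (0, 0) = 0\<close> have "I $$ (1, 0) = 0"
    by (metis mult.assoc mult_1_right mult_zero_left)
  with I_GL show "inv\<^bsub>GL 2\<^esub> A \<in> B2"
    by (simp add: B2_def I_def)
qed

lemma B2_inv_diag:
  assumes "A \<in> B2"
  shows "(inv\<^bsub>GL 2\<^esub> A) $$ (0, 0) * A $$ (0, 0) = 1" "(inv\<^bsub>GL 2\<^esub> A) $$ (1, 1) * A $$ (1, 1) = 1"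
proof -
  have "inv\<^bsub>GL 2\<^esub> A \<in> B2"
    using subgroup.m_inv_closed[OF subgroup_B2 assms] .
  moreover have "A \<in> carrier (GL 2)"
    using assms by (simp add: B2_def)
  then have "inv\<^bsub>GL 2\<^esub> A * A = 1\<^sub>m 2"
    using GL.l_inv by simp
  ultimately show "(inv\<^bsub>GL 2\<^esub> A) $$ (0, 0) * A $$ (0, 0) = 1" "(inv\<^bsub>GL 2\<^esub> A) $$ (1, 1) * A $$ (1, 1) = 1"
    using B2_mult_entries(1,2)[OF _ assms, of "inv\<^bsub>GL 2\<^esub> A"] by simp_all
qed

lemma subgroup_U2: "subgroup (U2 :: 'a::comm_ring_1 mat set) (GL 2)"
proof (rule GL.subgroupI)
  have "1\<^sub>m 2 \<in> U2"
    using one_in_B2 by (simp add: U2_def)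
  then show "U2 \<noteq> {}"
    by blast
  show "U2 \<subseteq> carrier (GL 2)"
    by (auto simp: U2_def B2_def)
next
  fix A B :: "'a mat" assume "A \<in> U2" "B \<in> U2"
  then have "A \<in> B2" "B \<in> B2" "A $$ (0, 0) = 1" "A $$ (1, 1) = 1" "B $$ (0, 0) = 1" "B $$ (1, 1) = 1"
    by (simp_all add: U2_def)
  then show "A \<otimes>\<^bsub>GL 2\<^esub> B \<in> U2"
    using B2_mult_closed B2_mult_entries(1,2)[of A B] by (simp add: U2_def)
next
  fix A :: "'a mat" assume "A \<in> U2"
  then have A: "A \<in> B2" and "A $$ (0, 0) = 1" "A $$ (1, 1) = 1"
    by (simp_all add: U2_def)
  then show "inv\<^bsub>GL 2\<^esub> A \<in> U2"
    using subgroup.m_inv_closed[OF subgroup_B2 A] B2_inv_diag[OF A] by (simp add: U2_def)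
qed

lemma U2_eq_mat2:
  assumes "A \<in> U2"
  shows "A = mat2 1 (A $$ (0, 1)) 0 1"
proof -
  have "A \<in> B2" and diag: "A $$ (0, 0) = 1" "A $$ (1, 1) = 1"
    using assms by (simp_all add: U2_def)
  from B2_eq_mat2[OF \<open>A \<in> B2\<close>] show ?thesis
    unfolding diag .
qed

lemma U2_mult_commute:
  assumes "A \<in> U2" "B \<in> U2"
  shows "A * B = B * A"
proof -
  have "A * B = mat2 1 (A $$ (0, 1)) 0 1 * mat2 1 (B $$ (0, 1)) 0 1"
    using U2_eq_mat2[OF assms(1)] U2_eq_mat2[OF assms(2)] by (rule arg_cong2[where f = "(*)"])
  moreover have "B * A = mat2 1 (B $$ (0, 1)) 0 1 * mat2 1 (A $$ (0, 1)) 0 1"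
    using U2_eq_mat2[OF assms(2)] U2_eq_mat2[OF assms(1)] by (rule arg_cong2[where f = "(*)"])
  ultimately show ?thesis
    by (simp add: add.commute)
qed

lemma B2_commutator_in_U2:
  assumes A: "A \<in> B2" and B: "B \<in> B2"
  shows "A * B * inv\<^bsub>GL 2\<^esub> A * inv\<^bsub>GL 2\<^esub> B \<in> U2"
proof -
  let ?A' = "inv\<^bsub>GL 2\<^esub> A" and ?B' = "inv\<^bsub>GL 2\<^esub> B"
  have A': "?A' \<in> B2" and B': "?B' \<in> B2"
    using A B subgroup.m_inv_closed[OF subgroup_B2] by blast+
  have AB: "A * B \<in> B2" and ABA': "A * B * ?A' \<in> B2" and C: "A * B * ?A' * ?B' \<in> B2"
    using A B A' B' by (blast intro: B2_mult_closed)+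
  have "(A * B * ?A' * ?B') $$ (i, i) = (?A' $$ (i, i) * A $$ (i, i)) * (?B' $$ (i, i) * B $$ (i, i))"
    if "i = 0 \<or> i = 1" for i
    using that B2_mult_entries(1,2)[OF ABA' B'] B2_mult_entries(1,2)[OF AB A'] B2_mult_entries(1,2)[OF A B]
    by (auto simp: mult_ac)
  with C B2_inv_diag[OF A] B2_inv_diag[OF B] show ?thesis
    by (simp add: U2_def)
qed

lemma solvable_B2: "solvable ((GL 2)\<lparr>carrier := B2 :: 'a::comm_ring_1 mat set\<rparr>)"
proof -
  interpret B: group "(GL 2)\<lparr>carrier := B2 :: 'a mat set\<rparr>"
    by (rule GL.subgroup_imp_group[OF subgroup_B2])
  show ?thesis
  proof (rule B.solvable_if_derived_set_in_abelian_subgroup)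
    show "subgroup U2 ((GL 2)\<lparr>carrier := B2\<rparr>)"
      by (rule GL.subgroup_incl[OF subgroup_U2 subgroup_B2]) (auto simp: U2_def)
    show "\<And>A B. A \<in> U2 \<Longrightarrow> B \<in> U2 \<Longrightarrow> A \<otimes>\<^bsub>(GL 2)\<lparr>carrier := B2\<rparr>\<^esub> B = B \<otimes>\<^bsub>(GL 2)\<lparr>carrier := B2\<rparr>\<^esub> A"
      by (simp add: U2_mult_commute)
  next
    have "A \<otimes>\<^bsub>(GL 2)\<lparr>carrier := B2\<rparr>\<^esub> B \<otimes>\<^bsub>(GL 2)\<lparr>carrier := B2\<rparr>\<^esub> inv\<^bsub>(GL 2)\<lparr>carrier := B2\<rparr>\<^esub> A
        \<otimes>\<^bsub>(GL 2)\<lparr>carrier := B2\<rparr>\<^esub> inv\<^bsub>(GL 2)\<lparr>carrier := B2\<rparr>\<^esub> B \<in> U2" if "A \<in> B2" "B \<in> B2" for A B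
      using that B2_commutator_in_U2 by (simp add: GL.m_inv_consistent[OF subgroup_B2])
    then show "derived_set ((GL 2)\<lparr>carrier := B2\<rparr>) (carrier ((GL 2)\<lparr>carrier := B2\<rparr>)) \<subseteq> U2"
      by auto
  qed
qed

section \<open>Transvections over a field\<close>

lemma mat2_in_GL_iff: "mat2 a b c d \<in> carrier (GL 2) \<longleftrightarrow> a * d - b * c \<noteq> (0 :: 'a::field)"
  by (simp add: dvd_field_iff)

definition transvections :: "'a::field mat set" where
  "transvections = range (\<lambda>t. mat2 1 t 0 1) \<union> range (\<lambda>t. mat2 1 0 t 1)"

lemma transvections_subset_GL: "transvections \<subseteq> carrier (GL 2)"
  by (auto simp: transvections_def mat2_in_GL_iff)

lemma lower_transvection_in_subgroup:
  fixes S :: "'a::field mat set"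
  assumes S: "subgroup S (GL 2)" and upper: "\<And>t. mat2 1 t 0 1 \<in> S"
    and M: "M \<in> S" "M $$ (1, 0) \<noteq> 0"
  shows "mat2 1 0 t 1 \<in> S"
proof -
  have mult: "X * Y \<in> S" if "X \<in> S" "Y \<in> S" for X Y
    using subgroup.m_closed[OF S that] by simp
  define a b c d where "a = M $$ (0, 0)" "b = M $$ (0, 1)" "c = M $$ (1, 0)" "d = M $$ (1, 1)"
  have M_GL: "M \<in> carrier (GL 2)"
    using subgroup.subset[OF S] M(1) by blast
  then have M_eq: "M = mat2 a b c d"
    using mat2_eta[of M] by (simp add: a_b_c_d_def)
  have "c \<noteq> 0"
    using M(2) by (simp add: a_b_c_d_def)
  define \<beta> where "\<beta> = b - a * d / c"
  have "\<beta> \<noteq> 0"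
    using M_GL \<open>c \<noteq> 0\<close> unfolding M_eq mat2_in_GL_iff \<beta>_def by (auto simp: field_simps)
  \<comment> \<open>Shearing M from both sides makes it antidiagonal; conjugating upper transvections by it gives lower ones.\<close>
  define X where "X = mat2 1 (- a / c) 0 1 * M * mat2 1 (- d / c) 0 1"
  have X_eq: "X = mat2 0 \<beta> c 0"
    using \<open>c \<noteq> 0\<close> unfolding X_def M_eq \<beta>_def by (simp add: field_simps)
  have "X \<in> S"
    unfolding X_def using upper M(1) by (intro mult)
  have "inv\<^bsub>GL 2\<^esub> X = mat2 0 (1 / c) (1 / \<beta>) 0"
    using \<open>c \<noteq> 0\<close> \<open>\<beta> \<noteq> 0\<close> by (intro GL_inv_eqI) (simp_all add: X_eq dvd_field_iff one_mat2)
  then have "mat2 0 (1 / c) (1 / \<beta>) 0 \<in> S"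
    using subgroup.m_inv_closed[OF S \<open>X \<in> S\<close>] by simp
  then have "X * mat2 1 (t * \<beta> / c) 0 1 * mat2 0 (1 / c) (1 / \<beta>) 0 \<in> S"
    using \<open>X \<in> S\<close> upper by (intro mult)
  moreover have "X * mat2 1 (t * \<beta> / c) 0 1 * mat2 0 (1 / c) (1 / \<beta>) 0 = mat2 1 0 t 1"
    using \<open>c \<noteq> 0\<close> \<open>\<beta> \<noteq> 0\<close> by (simp add: X_eq field_simps)
  ultimately show ?thesis
    by simp
qed

lemma generate_transvections_subset_derived:
  "generate (GL 2) transvections \<subseteq> derived (GL 2) (generate (GL 2) (transvections :: 'a::field_char_0 mat set))"
proof -
  let ?P = "generate (GL 2) (transvections :: 'a mat set)"
  have P: "subgroup ?P (GL 2)"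
    by (rule GL.generate_is_subgroup[OF transvections_subset_GL])
  have T: "mat2 1 t 0 1 \<in> ?P" "mat2 1 0 t 1 \<in> ?P" for t
    unfolding transvections_def by (blast intro: generate.incl)+
  define D :: "'a mat" where "D = mat2 2 0 0 (1 / 2)"
  have "D = mat2 1 2 0 1 * mat2 1 0 (- 1 / 2) 1 * mat2 1 2 0 1 * mat2 1 (- 1) 0 1 * mat2 1 0 1 1 * mat2 1 (- 1) 0 1"
    by (simp add: D_def)
  moreover have "X * Y \<in> ?P" if "X \<in> ?P" "Y \<in> ?P" for X Y
    using subgroup.m_closed[OF P that] by simp
  ultimately have "D \<in> ?P"
    using T by (simp only:)
  have inv_D: "inv\<^bsub>GL 2\<^esub> D = mat2 (1 / 2) 0 0 2"
    by (rule GL_inv_eqI) (simp_all add: D_def mat2_in_GL_iff one_mat2)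
  have inv_upper: "inv\<^bsub>GL 2\<^esub> (mat2 1 s 0 1) = mat2 1 (- s) 0 1"
    and inv_lower: "inv\<^bsub>GL 2\<^esub> (mat2 1 0 s 1) = mat2 1 0 (- s) 1" for s :: 'a
    by (rule GL_inv_eqI; simp add: mat2_in_GL_iff one_mat2)+
  \<comment> \<open>Conjugation by D scales the off-diagonal entry by 4 resp. 1/4, so each transvection is a commutator.\<close>
  have comm_eq: "D \<otimes>\<^bsub>GL 2\<^esub> mat2 1 (t / 3) 0 1 \<otimes>\<^bsub>GL 2\<^esub> inv\<^bsub>GL 2\<^esub> D \<otimes>\<^bsub>GL 2\<^esub> inv\<^bsub>GL 2\<^esub> (mat2 1 (t / 3) 0 1) = mat2 1 t 0 1"
    "D \<otimes>\<^bsub>GL 2\<^esub> mat2 1 0 (- (4 * t / 3)) 1 \<otimes>\<^bsub>GL 2\<^esub> inv\<^bsub>GL 2\<^esub> D \<otimes>\<^bsub>GL 2\<^esub> inv\<^bsub>GL 2\<^esub> (mat2 1 0 (- (4 * t / 3)) 1) = mat2 1 0 t 1"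
    for t :: 'a
    unfolding inv_D inv_upper inv_lower by (simp_all add: D_def)
  have "transvections \<subseteq> derived (GL 2) ?P"
  proof
    fix M :: "'a mat" assume "M \<in> transvections"
    then obtain t where "M = mat2 1 t 0 1 \<or> M = mat2 1 0 t 1"
      by (auto simp: transvections_def)
    then show "M \<in> derived (GL 2) ?P"
      using GL.commutator_in_derived[where n = 2, OF \<open>D \<in> ?P\<close> T(1)[of "t / 3"]]
        GL.commutator_in_derived[where n = 2, OF \<open>D \<in> ?P\<close> T(2)[of "- (4 * t / 3)"]]
      unfolding comm_eq by blast
  qed
  then show ?thesis
    by (rule GL.generate_subgroup_incl[OF _ GL.derived_is_subgroup[OF subgroup.subset[OF P]]])
qed

lemma not_solvable_seq_if_transvections_and_non_triangular:
  fixes S :: "'a::field_char_0 mat set"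
  assumes S: "subgroup S (GL 2)" and upper: "\<And>t. mat2 1 t 0 1 \<in> S"
    and M: "M \<in> S" "M $$ (1, 0) \<noteq> 0"
  shows "\<not> solvable_seq (GL 2) S"
proof (rule GL.not_solvable_seq_if_perfect_subset[OF S _ generate_transvections_subset_derived])
  have "transvections \<subseteq> S"
    using upper lower_transvection_in_subgroup[OF S upper M] by (auto simp: transvections_def)
  then show "generate (GL 2) transvections \<subseteq> S"
    by (rule GL.generate_subgroup_incl[OF _ S])
  show "mat2 1 1 0 1 \<in> generate (GL 2) transvections"
    unfolding transvections_def by (blast intro: generate.incl)
  show "mat2 1 1 0 1 \<noteq> \<one>\<^bsub>GL 2\<^esub>"
    by (simp add: one_mat2)
qed

section \<open>Maximality of the upper triangular subgroup\<close>

lemma (in comm_ring_hom) map_mat_in_hom_GL: "map_mat hom \<in> Group.hom (GL n) (GL n)"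
  by (rule homI) (auto simp: mat_hom_mult)

interpretation poly_eval: comm_ring_hom "\<lambda>p. poly p z"
  by unfold_locales simp_all

lemma not_solvable_if_psupset_B2:
  fixes H :: "'a::field_char_0 poly mat set"
  assumes H: "subgroup H (GL 2)" and "B2 \<subset> H"
  shows "\<not> solvable ((GL 2)\<lparr>carrier := H\<rparr>)"
proof
  assume solvable: "solvable ((GL 2)\<lparr>carrier := H\<rparr>)"
  obtain g where g: "g \<in> H" "g \<notin> B2"
    using \<open>B2 \<subset> H\<close> by blast
  then have "g $$ (1, 0) \<noteq> 0"
    using subgroup.subset[OF H] by (auto simp: B2_def)
  then obtain z where z: "poly (g $$ (1, 0)) z \<noteq> 0"
    using poly_all_0_iff_0 by blast
  let ?ev = "map_mat (\<lambda>p. poly p z)"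
  interpret ev: group_hom "GL 2" "GL 2 :: 'a mat monoid" ?ev
    by (intro group_hom.intro group_hom_axioms.intro group_GL poly_eval.map_mat_in_hom_GL)
  have "solvable_seq ((GL 2)\<lparr>carrier := H\<rparr>) H"
    using solvable by (simp add: solvable_def)
  then have "solvable_seq (GL 2) (?ev ` H)"
    by (rule group_hom.solvable_imp_solvable_img[OF ev.induced_group_hom'[OF H]])
  moreover have "\<not> solvable_seq (GL 2) (?ev ` H)"
  proof (rule not_solvable_seq_if_transvections_and_non_triangular)
    show "subgroup (?ev ` H) (GL 2)"
      by (rule ev.subgroup_img_is_subgroup[OF H])
    show "mat2 1 t 0 1 \<in> ?ev ` H" for t
    proof
      show "mat2 1 t 0 1 = ?ev (mat2 1 [:t:] 0 1)"
        by simp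
      have "mat2 1 [:t:] 0 1 \<in> B2"
        by (simp add: B2_def)
      then show "mat2 1 [:t:] 0 1 \<in> H"
        using \<open>B2 \<subset> H\<close> by blast
    qed
    show "?ev g \<in> ?ev ` H" "?ev g $$ (1, 0) \<noteq> 0"
      using g(1) z subgroup.subset[OF H] by auto
  qed
  ultimately show False
    by contradiction
qed

theorem lemma3p23:
  shows "subgroup B2_Cz GL2_Cz \<and> solvable (GL2_Cz\<lparr>carrier := B2_Cz\<rparr>) \<and>
         (\<forall>H. subgroup H GL2_Cz \<and> B2_Cz \<subset> H \<longrightarrow> \<not> solvable (GL2_Cz\<lparr>carrier := H\<rparr>))"
  unfolding GL2_Cz_eq_GL B2_Cz_eq_B2
  using subgroup_B2 solvable_B2 not_solvable_if_psupset_B2 by blast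

end
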